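(* Let $\kappa$ be a regular cardinal. For every $\alpha<\kappa^+$ there is a $\kappa$-Borel set $R_\alpha\subseteq\kappa^\kappa\times\kappa^\kappa$ which is universal for $\kappa$-$\Sigma_\alpha$, i.e. for every $A\in\kappa$-$\Sigma_\alpha$ there is $\xi\in\kappa^\kappa$ such that for all $\eta\in\kappa^\kappa$: $\eta\in A$ iff $(\eta,\xi)\in R_\alpha$.
   Context: Basic $\kappa$-open sets: $N_\eta=\{\zeta\in\kappa^\kappa\mid\eta\subseteq\zeta\}$ for $\eta:X\to\kappa$, $X\subseteq\kappa$, $|X|<\kappa$, and $\emptyset$; in $\kappa^\kappa\times\kappa^\kappa$ they are products $N_\eta\times N_\xi$. The $\kappa$-Borel sets form the smallest class containing the basic $\kappa$-open sets and closed under complements and unions and intersections of at most $\kappa$ sets. Hierarchy: $\kappa$-$\Sigma_0$ is the collection of sets $N_{\{(i,j)\}}=\{f\in\kappa^\kappa\mid f(i)=j\}$, $i,j<\kappa$. If $\alpha$ is even, $\kappa$-$\Sigma_{\alpha+1}$ is the collection of unions of $\kappa$ many $\kappa$-$\Sigma_\alpha$ sets; if $\alpha$ is odd, $\kappa$-$\Sigma_{\alpha+1}$ is the collection of intersections of $\kappa$ many $\kappa$-$\Sigma_\alpha$ sets; if $\alpha$ is a limit, $\kappa$-$\Sigma_\alpha=\bigcup_{\beta<\alpha}\kappa$-$\Sigma_\beta$. (An ordinal is even/odd according to the parity of its finite part.) *)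

theory Defs
  imports Main
begin

text \<open>kappa is represented by a type 'k together with a cardinal order r on UNIV::'k set.
  Points of kappa^kappa are functions 'k \<Rightarrow> 'k.\<close>

definition Nbasic :: "('k \<Rightarrow> 'k option) \<Rightarrow> ('k \<Rightarrow> 'k) set" where
  "Nbasic \<eta> = {\<zeta>. \<forall>x \<in> dom \<eta>. \<eta> x = Some (\<zeta> x)}"

definition small_dom :: "'k rel \<Rightarrow> ('k \<Rightarrow> 'k option) \<Rightarrow> bool" where
  "small_dom r \<eta> \<longleftrightarrow> ordLess2 (card_of (dom \<eta>)) r"

inductive_set kborel2 :: "'k rel \<Rightarrow> (('k \<Rightarrow> 'k) \<times> ('k \<Rightarrow> 'k)) set set"
  for r :: "'k rel" where
  basic: "small_dom r \<eta> \<Longrightarrow> small_dom r \<xi> \<Longrightarrow> Nbasic \<eta> \<times> Nbasic \<xi> \<in> kborel2 r"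
| empty: "{} \<in> kborel2 r"
| compl: "A \<in> kborel2 r \<Longrightarrow> - A \<in> kborel2 r"
| union: "\<forall>A \<in> F. A \<in> kborel2 r \<Longrightarrow> ordLeq3 (card_of F) r \<Longrightarrow> \<Union> F \<in> kborel2 r"
| inter: "\<forall>A \<in> F. A \<in> kborel2 r \<Longrightarrow> ordLeq3 (card_of F) r \<Longrightarrow> \<Inter> F \<in> kborel2 r"

definition is_pred :: "'k rel \<Rightarrow> 'k \<Rightarrow> 'k \<Rightarrow> bool" where
  "is_pred w b a \<longleftrightarrow> (b, a) \<in> w \<and> b \<noteq> a \<and>
     (\<forall>c. (b, c) \<in> w \<and> (c, a) \<in> w \<longrightarrow> c = b \<or> c = a)"

text \<open>Ordinals alpha < kappa^+ are represented as the order type of the initial segment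
  below an element a of a well-order w whose field is a subset of 'k (so |alpha| \<le> kappa).
  hier w a = (alpha is even, kappa-Sigma_alpha) where alpha = order type of underS w a.\<close>
definition hier :: "'k rel \<Rightarrow> 'k \<Rightarrow> bool \<times> ('k \<Rightarrow> 'k) set set" where
  "hier w = wfrec (w - Id) (\<lambda>H a.
     if (\<exists>b. is_pred w b a) then
       (let b = (SOME b. is_pred w b a); ev = fst (H b); S = snd (H b) in
         (\<not> ev,
          if ev then {\<Union> (range F) | F :: 'k \<Rightarrow> ('k \<Rightarrow> 'k) set. range F \<subseteq> S}
          else {\<Inter> (range F) | F :: 'k \<Rightarrow> ('k \<Rightarrow> 'k) set. range F \<subseteq> S}))
     else if (\<exists>b. (b, a) \<in> w - Id) then
       (True, \<Union> {snd (H b) | b. (b, a) \<in> w - Id})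
     else
       (True, {{f. f i = j} | i j. True}))"

definition kSigma :: "'k rel \<Rightarrow> 'k \<Rightarrow> ('k \<Rightarrow> 'k) set set" where
  "kSigma w a = snd (hier w a)"

end

theory Submission
  imports Defs
begin

text \<open>
  A universal set for \<open>\<kappa>\<close>-\<open>\<Sigma>\<^sub>0\<close> is \<open>{(\<eta>, \<xi>). \<eta> (\<xi> c) = \<xi> d}\<close>.
  Reindexing the code along an injection \<open>g\<close>, \<open>(\<eta>, \<xi>) \<mapsto> (\<eta>, \<xi> \<circ> g)\<close>, pulls basic
  open sets back to basic open sets and so preserves \<open>\<kappa>\<close>-Borel sets. At a successor step a
  pairing bijection \<open>\<pi> : \<kappa> \<times> \<kappa> \<rightarrow> \<kappa>\<close> lets one code \<open>\<xi>\<close> carry \<open>\<kappa>\<close> codes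
  \<open>\<xi> \<circ> \<pi>(i, -)\<close>, and the union (intersection) over \<open>i\<close> of the correspondingly reindexed copies
  of the previous universal set is universal. At a limit step one coordinate of the code selects
  the level below, and the remaining coordinates code a set at that level.
\<close>

unbundle cardinal_syntax

definition universal_for :: "('a \<times> 'b) set \<Rightarrow> 'a set set \<Rightarrow> bool" where
  "universal_for R \<A> \<longleftrightarrow> (\<forall>A \<in> \<A>. \<exists>\<xi>. \<forall>\<eta>. \<eta> \<in> A \<longleftrightarrow> (\<eta>, \<xi>) \<in> R)"

lemma card_of_UNIV_ordLeq_card_order:
  assumes "card_order (r :: 'k rel)"
  shows "|UNIV :: 'k set| \<le>o r"
  using card_of_unique[OF assms] ordIso_iff_ordLeq ordIso_symmetric by blast

lemma finite_ordLess_card_order: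
  assumes "card_order (r :: 'k rel)" and "infinite (UNIV :: 'k set)" and "finite A"
  shows "|A| <o r"
  using assms card_of_Well_order card_order_on_well_order_on Field_card_of well_order_on_Field
  by (metis finite_ordLess_infinite)

lemma kborel2_UN:
  assumes "\<And>i. i \<in> I \<Longrightarrow> f i \<in> kborel2 r" and "|I| \<le>o r"
  shows "(\<Union>i\<in>I. f i) \<in> kborel2 r"
  by (rule kborel2.union) (use assms card_of_image ordLeq_transitive in blast)+

lemma kborel2_INT:
  assumes "\<And>i. i \<in> I \<Longrightarrow> f i \<in> kborel2 r" and "|I| \<le>o r"
  shows "(\<Inter>i\<in>I. f i) \<in> kborel2 r"
  by (rule kborel2.inter) (use assms card_of_image ordLeq_transitive in blast)+

lemma kborel2_Int:
  assumes "card_order (r :: 'k rel)" and "infinite (UNIV :: 'k set)"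
    and "X \<in> kborel2 r" and "Y \<in> kborel2 r"
  shows "X \<inter> Y \<in> kborel2 r"
proof -
  have "(\<Inter>Z\<in>{X, Y}. Z) \<in> kborel2 r"
    using assms by (intro kborel2_INT ordLess_imp_ordLeq finite_ordLess_card_order) auto
  then show ?thesis by simp
qed

lemma kborel2_basic_finite:
  assumes "card_order (r :: 'k rel)" and "infinite (UNIV :: 'k set)"
    and "finite (dom \<eta>)" and "finite (dom \<xi>)"
  shows "Nbasic \<eta> \<times> Nbasic \<xi> \<in> kborel2 r"
  using assms by (intro kborel2.basic) (simp_all add: small_dom_def finite_ordLess_card_order)

lemma Nbasic_vimage_comp:
  assumes "inj g"
  shows "(\<lambda>\<xi>. \<xi> \<circ> g) -` Nbasic \<zeta> = Nbasic ((\<zeta> \<circ> inv g) |` range g)"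
  using assms by (auto simp: Nbasic_def restrict_map_def dom_def)

lemma kborel2_vimage_comp_snd:
  assumes "inj g" and "A \<in> kborel2 r"
  shows "map_prod id (\<lambda>\<xi>. \<xi> \<circ> g) -` A \<in> kborel2 r"
  using assms(2)
proof (induction rule: kborel2.induct)
  case (basic \<eta> \<zeta>)
  have "|dom ((\<zeta> \<circ> inv g) |` range g)| \<le>o |dom \<zeta>|"
  proof -
    have "dom ((\<zeta> \<circ> inv g) |` range g) \<subseteq> g ` dom \<zeta>"
      by (auto simp: restrict_map_def split: if_splits intro: image_eqI[OF f_inv_into_f[symmetric]])
    then show ?thesis
      using card_of_mono1 card_of_image ordLeq_transitive by blast
  qed
  then have "small_dom r ((\<zeta> \<circ> inv g) |` range g)"
    using basic(2) unfolding small_dom_def by (rule ordLeq_ordLess_trans)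
  then have "Nbasic \<eta> \<times> Nbasic ((\<zeta> \<circ> inv g) |` range g) \<in> kborel2 r"
    by (rule kborel2.basic[OF basic(1)])
  moreover have "map_prod id (\<lambda>\<xi>. \<xi> \<circ> g) -` (Nbasic \<eta> \<times> Nbasic \<zeta>)
      = Nbasic \<eta> \<times> Nbasic ((\<zeta> \<circ> inv g) |` range g)"
    unfolding Nbasic_vimage_comp[OF assms(1), symmetric] by auto
  ultimately show ?case by (simp only:)
next
  case empty
  then show ?case by (simp add: kborel2.empty)
next
  case (compl A)
  then show ?case by (simp add: vimage_Compl kborel2.compl)
next
  case (union F)
  show ?case
    unfolding vimage_Union by (rule kborel2_UN) (use union in blast)+
next
  case (inter F)
  have "map_prod id (\<lambda>\<xi>. \<xi> \<circ> g) -` \<Inter> F = (\<Inter>A\<in>F. map_prod id (\<lambda>\<xi>. \<xi> \<circ> g) -` A)"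
    by blast
  also have "\<dots> \<in> kborel2 r"
    by (rule kborel2_INT) (use inter in blast)+
  finally show ?case .
qed

lemma universal_for_sequence_codes:
  fixes R :: "(('k \<Rightarrow> 'k) \<times> ('k \<Rightarrow> 'k)) set"
  assumes "infinite (UNIV :: 'k set)" and "R \<in> kborel2 r" and "universal_for R \<A>"
  obtains P where "\<And>i. P i \<in> kborel2 r"
    and "\<And>F :: 'k \<Rightarrow> ('k \<Rightarrow> 'k) set. range F \<subseteq> \<A> \<Longrightarrow> \<exists>\<xi>. \<forall>i \<eta>. \<eta> \<in> F i \<longleftrightarrow> (\<eta>, \<xi>) \<in> P i"
proof -
  obtain \<pi> :: "'k \<times> 'k \<Rightarrow> 'k" where "bij_betw \<pi> (UNIV \<times> UNIV) UNIV"
    using card_of_Times_same_infinite[OF assms(1)] unfolding card_of_ordIso[symmetric] ..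
  then have inj_\<pi>: "inj \<pi>" by (simp add: bij_is_inj)
  define P where "P i = map_prod id (\<lambda>\<xi>. \<xi> \<circ> (\<pi> \<circ> Pair i)) -` R" for i
  have "P i \<in> kborel2 r" for i
    unfolding P_def by (intro kborel2_vimage_comp_snd assms(2) inj_compose[OF inj_\<pi>]) (simp add: inj_on_def)
  moreover have "\<exists>\<xi>. \<forall>i \<eta>. \<eta> \<in> F i \<longleftrightarrow> (\<eta>, \<xi>) \<in> P i" if "range F \<subseteq> \<A>" for F :: "'k \<Rightarrow> ('k \<Rightarrow> 'k) set"
  proof -
    have "\<forall>i. \<exists>\<xi>. \<forall>\<eta>. \<eta> \<in> F i \<longleftrightarrow> (\<eta>, \<xi>) \<in> R"
      using that assms(3) unfolding universal_for_def by blast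
    then obtain X where X: "\<And>i \<eta>. \<eta> \<in> F i \<longleftrightarrow> (\<eta>, X i) \<in> R"
      by metis
    have "case_prod X \<circ> inv \<pi> \<circ> (\<pi> \<circ> Pair i) = X i" for i
      using inj_\<pi> by (auto simp: fun_eq_iff)
    then have "\<forall>i \<eta>. \<eta> \<in> F i \<longleftrightarrow> (\<eta>, case_prod X \<circ> inv \<pi>) \<in> P i"
      by (simp add: P_def X)
    then show ?thesis by blast
  qed
  ultimately show ?thesis
    using that by blast
qed

lemma universal_for_Unions:
  fixes R :: "(('k \<Rightarrow> 'k) \<times> ('k \<Rightarrow> 'k)) set"
  assumes "card_order r" and "infinite (UNIV :: 'k set)"
    and "R \<in> kborel2 r" and "universal_for R \<A>"
  shows "\<exists>R' \<in> kborel2 r. universal_for R' {\<Union> (range F) | F :: 'k \<Rightarrow> ('k \<Rightarrow> 'k) set. range F \<subseteq> \<A>}"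
proof -
  obtain P where P_borel: "\<And>i. P i \<in> kborel2 r"
    and P_codes: "\<And>F :: 'k \<Rightarrow> _. range F \<subseteq> \<A> \<Longrightarrow> \<exists>\<xi>. \<forall>i \<eta>. \<eta> \<in> F i \<longleftrightarrow> (\<eta>, \<xi>) \<in> P i"
    using universal_for_sequence_codes[OF assms(2-4)] by blast
  have "(\<Union>i. P i) \<in> kborel2 r"
    using P_borel card_of_UNIV_ordLeq_card_order[OF assms(1)] by (rule kborel2_UN)
  moreover have "universal_for (\<Union>i. P i) {\<Union> (range F) | F :: 'k \<Rightarrow> _. range F \<subseteq> \<A>}"
    unfolding universal_for_def
  proof
    fix A assume "A \<in> {\<Union> (range F) | F :: 'k \<Rightarrow> _. range F \<subseteq> \<A>}"
    then obtain F :: "'k \<Rightarrow> _" where A: "A = \<Union> (range F)" and "range F \<subseteq> \<A>"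
      by blast
    then obtain \<xi> where "\<forall>i \<eta>. \<eta> \<in> F i \<longleftrightarrow> (\<eta>, \<xi>) \<in> P i"
      using P_codes by blast
    then have "\<forall>\<eta>. \<eta> \<in> A \<longleftrightarrow> (\<eta>, \<xi>) \<in> (\<Union>i. P i)"
      unfolding A by blast
    then show "\<exists>\<xi>. \<forall>\<eta>. \<eta> \<in> A \<longleftrightarrow> (\<eta>, \<xi>) \<in> (\<Union>i. P i)" by blast
  qed
  ultimately show ?thesis ..
qed

lemma universal_for_Inters:
  fixes R :: "(('k \<Rightarrow> 'k) \<times> ('k \<Rightarrow> 'k)) set"
  assumes "card_order r" and "infinite (UNIV :: 'k set)"
    and "R \<in> kborel2 r" and "universal_for R \<A>"
  shows "\<exists>R' \<in> kborel2 r. universal_for R' {\<Inter> (range F) | F :: 'k \<Rightarrow> ('k \<Rightarrow> 'k) set. range F \<subseteq> \<A>}"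
proof -
  obtain P where P_borel: "\<And>i. P i \<in> kborel2 r"
    and P_codes: "\<And>F :: 'k \<Rightarrow> _. range F \<subseteq> \<A> \<Longrightarrow> \<exists>\<xi>. \<forall>i \<eta>. \<eta> \<in> F i \<longleftrightarrow> (\<eta>, \<xi>) \<in> P i"
    using universal_for_sequence_codes[OF assms(2-4)] by blast
  have "(\<Inter>i. P i) \<in> kborel2 r"
    using P_borel card_of_UNIV_ordLeq_card_order[OF assms(1)] by (rule kborel2_INT)
  moreover have "universal_for (\<Inter>i. P i) {\<Inter> (range F) | F :: 'k \<Rightarrow> _. range F \<subseteq> \<A>}"
    unfolding universal_for_def
  proof
    fix A assume "A \<in> {\<Inter> (range F) | F :: 'k \<Rightarrow> _. range F \<subseteq> \<A>}"
    then obtain F :: "'k \<Rightarrow> _" where A: "A = \<Inter> (range F)" and "range F \<subseteq> \<A>"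
      by blast
    then obtain \<xi> where "\<forall>i \<eta>. \<eta> \<in> F i \<longleftrightarrow> (\<eta>, \<xi>) \<in> P i"
      using P_codes by blast
    then have "\<forall>\<eta>. \<eta> \<in> A \<longleftrightarrow> (\<eta>, \<xi>) \<in> (\<Inter>i. P i)"
      unfolding A by blast
    then show "\<exists>\<xi>. \<forall>\<eta>. \<eta> \<in> A \<longleftrightarrow> (\<eta>, \<xi>) \<in> (\<Inter>i. P i)" by blast
  qed
  ultimately show ?thesis ..
qed

lemma universal_for_UN:
  fixes B :: "'k set" and \<A> :: "'k \<Rightarrow> ('k \<Rightarrow> 'k) set set"
  assumes "card_order r" and "infinite (UNIV :: 'k set)"
    and "\<And>b. b \<in> B \<Longrightarrow> \<exists>R \<in> kborel2 r. universal_for R (\<A> b)"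
  shows "\<exists>R \<in> kborel2 r. universal_for R (\<Union>b\<in>B. \<A> b)"
proof -
  obtain R where R_borel: "\<And>b. b \<in> B \<Longrightarrow> R b \<in> kborel2 r"
    and R_univ: "\<And>b. b \<in> B \<Longrightarrow> universal_for (R b) (\<A> b)"
    using bchoice[of B "\<lambda>b R. R \<in> kborel2 r \<and> universal_for R (\<A> b)"] assms(3) by blast
  fix c :: 'k
  obtain g :: "'k \<Rightarrow> 'k" where "bij_betw g UNIV (UNIV - {c})"
    using infinite_imp_bij_betw[OF assms(2)] ..
  then have "inj g" and "c \<notin> range g"
    by (auto simp: bij_betw_def)
  \<comment> \<open>\<open>\<xi> c\<close> selects the level \<open>b\<close>; \<open>\<xi> \<circ> g\<close> codes a set of level \<open>b\<close>\<close>
  define S where "S b = (UNIV \<times> {\<xi>. \<xi> c = b}) \<inter> map_prod id (\<lambda>\<xi>. \<xi> \<circ> g) -` R b" for b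
  have "S b \<in> kborel2 r" if "b \<in> B" for b
  proof -
    have "UNIV \<times> {\<xi>. \<xi> c = b} = Nbasic Map.empty \<times> Nbasic [c \<mapsto> b]"
      by (auto simp: Nbasic_def)
    also have "\<dots> \<in> kborel2 r"
      using assms(1,2) by (rule kborel2_basic_finite) simp_all
    finally show ?thesis
      unfolding S_def using assms(1,2) \<open>inj g\<close> R_borel[OF that]
      by (intro kborel2_Int kborel2_vimage_comp_snd)
  qed
  moreover have "|B| \<le>o r"
    using card_of_mono1[OF subset_UNIV] card_of_UNIV_ordLeq_card_order[OF assms(1)]
    by (rule ordLeq_transitive)
  ultimately have "(\<Union>b\<in>B. S b) \<in> kborel2 r"
    by (rule kborel2_UN)
  moreover have "universal_for (\<Union>b\<in>B. S b) (\<Union>b\<in>B. \<A> b)"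
    unfolding universal_for_def
  proof
    fix A assume "A \<in> (\<Union>b\<in>B. \<A> b)"
    then obtain b where "b \<in> B" and "A \<in> \<A> b" by blast
    then obtain \<xi> where \<xi>: "\<forall>\<eta>. \<eta> \<in> A \<longleftrightarrow> (\<eta>, \<xi>) \<in> R b"
      using R_univ unfolding universal_for_def by blast
    define \<xi>' where "\<xi>' m = (if m = c then b else \<xi> (inv g m))" for m
    have "\<xi>' (g m) = \<xi> m" for m
      using \<open>inj g\<close> \<open>c \<notin> range g\<close> unfolding \<xi>'_def by (metis inv_f_f rangeI)
    then have "\<xi>' \<circ> g = \<xi>"
      by fastforce
    moreover have "\<xi>' c = b"
      by (simp add: \<xi>'_def)
    ultimately have "\<forall>\<eta>. \<eta> \<in> A \<longleftrightarrow> (\<eta>, \<xi>') \<in> (\<Union>b\<in>B. S b)"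
      using \<xi> \<open>b \<in> B\<close> by (auto simp: S_def)
    then show "\<exists>\<xi>. \<forall>\<eta>. \<eta> \<in> A \<longleftrightarrow> (\<eta>, \<xi>) \<in> (\<Union>b\<in>B. S b)" by blast
  qed
  ultimately show ?thesis ..
qed

lemma universal_for_Sigma0:
  assumes "card_order r" and "infinite (UNIV :: 'k set)"
  shows "\<exists>R \<in> kborel2 r. universal_for R {{f :: 'k \<Rightarrow> 'k. f i = j} | i j. True}"
proof -
  obtain c d :: 'k where "c \<noteq> d"
    using assms(2) by (metis (full_types) finite.emptyI finite.insertI UNIV_eq_I insertI1)
  define R where "R = (\<Union>(i, j) \<in> UNIV. {f :: 'k \<Rightarrow> 'k. f i = j} \<times> {\<xi>. \<xi> c = i \<and> \<xi> d = j})"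
  have "{f :: 'k \<Rightarrow> 'k. f i = j} \<times> {\<xi>. \<xi> c = i \<and> \<xi> d = j} = Nbasic [i \<mapsto> j] \<times> Nbasic [c \<mapsto> i, d \<mapsto> j]"
    for i j
    using \<open>c \<noteq> d\<close> by (auto simp: Nbasic_def)
  then have "{f :: 'k \<Rightarrow> 'k. f i = j} \<times> {\<xi>. \<xi> c = i \<and> \<xi> d = j} \<in> kborel2 r" for i j
    using kborel2_basic_finite[OF assms] by simp
  moreover have "|UNIV \<times> UNIV :: ('k \<times> 'k) set| \<le>o r"
    using card_of_Times_same_infinite[OF assms(2)] card_of_UNIV_ordLeq_card_order[OF assms(1)]
    by (rule ordIso_ordLeq_trans)
  ultimately have "R \<in> kborel2 r"
    unfolding R_def by (intro kborel2_UN) auto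
  moreover have "universal_for R {{f :: 'k \<Rightarrow> 'k. f i = j} | i j. True}"
    unfolding universal_for_def
  proof
    fix A assume "A \<in> {{f :: 'k \<Rightarrow> 'k. f i = j} | i j. True}"
    then obtain i j where "A = {f. f i = j}" by blast
    moreover have "((\<lambda>_. i)(d := j)) c = i" and "((\<lambda>_. i)(d := j)) d = j"
      using \<open>c \<noteq> d\<close> by simp_all
    ultimately have "\<forall>\<eta>. \<eta> \<in> A \<longleftrightarrow> (\<eta>, (\<lambda>_. i)(d := j)) \<in> R"
      unfolding R_def by auto
    then show "\<exists>\<xi>. \<forall>\<eta>. \<eta> \<in> A \<longleftrightarrow> (\<eta>, \<xi>) \<in> R" by blast
  qed
  ultimately show ?thesis ..
qed

lemma hier_unfold:
  assumes "Well_order w"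
  shows "hier w a =
    (if \<exists>b. is_pred w b a then
       (let b = SOME b. is_pred w b a; ev = fst (hier w b); S = snd (hier w b) in
         (\<not> ev,
          if ev then {\<Union> (range F) | F :: 'k \<Rightarrow> ('k \<Rightarrow> 'k) set. range F \<subseteq> S}
          else {\<Inter> (range F) | F :: 'k \<Rightarrow> ('k \<Rightarrow> 'k) set. range F \<subseteq> S}))
     else if \<exists>b. (b, a) \<in> w - Id then
       (True, \<Union> {snd (hier w b) | b. (b, a) \<in> w - Id})
     else
       (True, {{f. f i = j} | i j. True}))"
proof -
  have wf: "wf (w - Id)"
    using assms by (simp add: well_order_on_def)
  show ?thesis
  proof (cases "\<exists>b. is_pred w b a")
    case True
    then have "(SOME b. is_pred w b a, a) \<in> w - Id"
      by (metis (mono_tags) someI_ex is_pred_def Diff_iff pair_in_Id_conv)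
    with True show ?thesis
      by (subst hier_def, subst wfrec[OF wf]) (simp add: hier_def[symmetric] cut_apply Let_def)
  next
    case False
    have "{snd (cut (hier w) (w - Id) a b) | b. (b, a) \<in> w - Id} = {snd (hier w b) | b. (b, a) \<in> w - Id}"
      by (metis (lifting) cut_apply)
    with False show ?thesis
      by (subst hier_def, subst wfrec[OF wf]) (simp only: hier_def[symmetric] if_False)
  qed
qed

lemma is_pred_unique:
  assumes "Well_order w" and "is_pred w b a" and "is_pred w b' a"
  shows "b = b'"
proof -
  have "b \<in> Field w" and "b' \<in> Field w"
    using assms(2,3) by (auto simp: is_pred_def Field_def)
  then have "(b, b') \<in> w \<or> (b', b) \<in> w"
    using assms(1) wo_rel.TOTALS[of w] by (simp add: wo_rel_def)
  then show ?thesis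
    using assms(2,3) unfolding is_pred_def by blast
qed

lemma kSigma_successor:
  assumes "Well_order w" and "is_pred w b a"
  shows "kSigma w a = {\<Union> (range F) | F :: 'k \<Rightarrow> ('k \<Rightarrow> 'k) set. range F \<subseteq> kSigma w b}
       \<or> kSigma w a = {\<Inter> (range F) | F :: 'k \<Rightarrow> ('k \<Rightarrow> 'k) set. range F \<subseteq> kSigma w b}"
proof -
  have "(SOME b. is_pred w b a) = b"
    using assms by (blast intro: is_pred_unique someI)
  then show ?thesis
    using hier_unfold[OF assms(1), of a] assms(2) by (auto simp: kSigma_def Let_def)
qed

lemma kSigma_limit:
  assumes "Well_order w" and "\<nexists>b. is_pred w b a" and "\<exists>b. (b, a) \<in> w - Id"
  shows "kSigma w a = (\<Union>b \<in> {b. (b, a) \<in> w - Id}. kSigma w b)"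
  using hier_unfold[OF assms(1), of a] assms(2,3) by (auto simp: kSigma_def)

lemma kSigma_minimal:
  assumes "Well_order w" and "\<forall>b. (b, a) \<notin> w - Id"
  shows "kSigma w a = {{f. f i = j} | i j. True}"
  using hier_unfold[OF assms(1), of a] assms(2) by (auto simp: kSigma_def is_pred_def)

lemma kborel2_universal_for_kSigma:
  assumes "card_order r" and "infinite (UNIV :: 'k set)" and "Well_order (w :: 'k rel)"
  shows "\<exists>R \<in> kborel2 r. universal_for R (kSigma w a)"
proof -
  have "wf (w - Id)"
    using assms(3) by (simp add: well_order_on_def)
  then show ?thesis
  proof (induction a rule: wf_induct_rule)
    case (less a)
    consider (successor) b where "is_pred w b a"
      | (limit) "\<nexists>b. is_pred w b a" and "\<exists>b. (b, a) \<in> w - Id"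
      | (minimal) "\<forall>b. (b, a) \<notin> w - Id"
      by blast
    then show ?case
    proof cases
      case successor
      then have "(b, a) \<in> w - Id"
        by (auto simp: is_pred_def)
      then obtain R where "R \<in> kborel2 r" and "universal_for R (kSigma w b)"
        using less by blast
      then show ?thesis
        using kSigma_successor[OF assms(3) successor]
          universal_for_Unions[OF assms(1,2)] universal_for_Inters[OF assms(1,2)]
        by (elim disjE) simp_all
    next
      case limit
      have "\<exists>R \<in> kborel2 r. universal_for R (\<Union>b \<in> {b. (b, a) \<in> w - Id}. kSigma w b)"
        using less by (intro universal_for_UN[OF assms(1,2)]) simp
      then show ?thesis
        using kSigma_limit[OF assms(3) limit] by simp
    next
      case minimal
      then show ?thesis
        using kSigma_minimal[OF assms(3) minimal] universal_for_Sigma0[OF assms(1,2)] by simp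
    qed
  qed
qed

theorem lemma3p16:
  fixes r :: "'k rel" and w :: "'k rel" and a :: 'k
  assumes "card_order r" and "infinite (UNIV :: 'k set)" and "regularCard r"
    and "Well_order w" and "a \<in> Field w"
  shows "\<exists>R \<in> kborel2 r. \<forall>A \<in> kSigma w a. \<exists>\<xi>. \<forall>\<eta>. \<eta> \<in> A \<longleftrightarrow> (\<eta>, \<xi>) \<in> R"
  using kborel2_universal_for_kSigma[OF assms(1,2,4)] unfolding universal_for_def .

end
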